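(* Let $p\in(0,1)$. Then $h^{\Phi_p}(\mathbb R^n)\subsetneqq h^{\phi_p}(\mathbb R^n)$.
   Context: $\Phi_p(\tau):=\tau/(1+\tau^{1-p})$. For $x\in\mathbb R^n$, $t\ge0$, $\phi_p(x,t):=\frac{t}{1+[t(1+|x|)^n]^{1-p}}$ when $n(1/p-1)\notin\mathbb N$ and $\phi_p(x,t):=\frac{t}{1+[t(1+|x|)^n]^{1-p}[\log(e+|x|)]^p}$ when $n(1/p-1)\in\mathbb N$. $\|f\|_{L^{\Phi_p}}:=\inf\{\lambda>0:\int\Phi_p(|f(x)|/\lambda)dx\le1\}$ and $\|f\|_{L^{\phi_p}}:=\inf\{\lambda>0:\int\phi_p(x,|f(x)|/\lambda)dx\le1\}$. For fixed $\varphi\in\mathcal S$ with $\int\varphi\ne0$, $m(f,\varphi)(x):=\sup_{s\in(0,1)}|f*\varphi_s(x)|$, $\varphi_s(x)=s^{-n}\varphi(x/s)$; $h^{\Phi_p}(\mathbb R^n):=\{f\in\mathcal S':\|m(f,\varphi)\|_{L^{\Phi_p}}<\infty\}$ and $h^{\phi_p}(\mathbb R^n):=\{f\in\mathcal S':\|m(f,\varphi)\|_{L^{\phi_p}}<\infty\}$. *)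

theory Defs
  imports "HOL-Analysis.Analysis"
begin

definition dirderiv :: "'a::euclidean_space \<Rightarrow> ('a \<Rightarrow> complex) \<Rightarrow> 'a \<Rightarrow> complex" where
  "dirderiv v f x = vector_derivative (\<lambda>t::real. f (x + t *\<^sub>R v)) (at 0)"

fun ideriv :: "'a::euclidean_space list \<Rightarrow> ('a \<Rightarrow> complex) \<Rightarrow> 'a \<Rightarrow> complex" where
  "ideriv [] f = f"
| "ideriv (v # vs) f = dirderiv v (ideriv vs f)"

definition schwartz :: "('a::euclidean_space \<Rightarrow> complex) \<Rightarrow> bool" where
  "schwartz f \<longleftrightarrow>
     (\<forall>ds. set ds \<subseteq> Basis \<longrightarrow>
        (\<forall>v\<in>Basis. \<forall>x. (\<lambda>t::real. ideriv ds f (x + t *\<^sub>R v)) differentiable (at 0)) \<and>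
        (\<forall>N::nat. \<exists>C. \<forall>x. (1 + norm x) ^ N * norm (ideriv ds f x) \<le> C))"

definition sw_seminorm :: "nat \<Rightarrow> 'a::euclidean_space list \<Rightarrow> ('a \<Rightarrow> complex) \<Rightarrow> real" where
  "sw_seminorm N ds f = (SUP x. (1 + norm x) ^ N * norm (ideriv ds f x))"

text \<open>Tempered distributions: continuous linear functionals on the Schwartz space
  (only their values on Schwartz functions matter).\<close>
definition tempered :: "(('a::euclidean_space \<Rightarrow> complex) \<Rightarrow> complex) \<Rightarrow> bool" where
  "tempered T \<longleftrightarrow>
     (\<forall>f g. schwartz f \<longrightarrow> schwartz g \<longrightarrow> T (\<lambda>x. f x + g x) = T f + T g) \<and>
     (\<forall>f c. schwartz f \<longrightarrow> T (\<lambda>x. c * f x) = c * T f) \<and>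
     (\<exists>C N M. \<forall>f. schwartz f \<longrightarrow>
        norm (T f) \<le> C * (\<Sum>ds\<in>{ds. set ds \<subseteq> Basis \<and> length ds \<le> M}. sw_seminorm N ds f))"

definition dilate :: "real \<Rightarrow> ('a::euclidean_space \<Rightarrow> complex) \<Rightarrow> 'a \<Rightarrow> complex" where
  "dilate s \<phi> x = complex_of_real (1 / s ^ DIM('a)) * \<phi> ((1 / s) *\<^sub>R x)"

definition dconv :: "(('a::euclidean_space \<Rightarrow> complex) \<Rightarrow> complex) \<Rightarrow> ('a \<Rightarrow> complex) \<Rightarrow> 'a \<Rightarrow> complex" where
  "dconv T \<psi> x = T (\<lambda>y. \<psi> (x - y))"

definition locmax :: "(('a::euclidean_space \<Rightarrow> complex) \<Rightarrow> complex) \<Rightarrow> ('a \<Rightarrow> complex) \<Rightarrow> 'a \<Rightarrow> ennreal" where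
  "locmax T \<phi> x = (SUP s\<in>{0<..<1::real}. ennreal (norm (dconv T (dilate s \<phi>) x)))"

definition PhiP :: "real \<Rightarrow> real \<Rightarrow> real" where
  "PhiP p \<tau> = \<tau> / (1 + \<tau> powr (1 - p))"

definition phiP :: "real \<Rightarrow> 'a::euclidean_space \<Rightarrow> real \<Rightarrow> real" where
  "phiP p x t =
     (if \<exists>k::nat. real DIM('a) * (1 / p - 1) = real k
      then t / (1 + (t * (1 + norm x) ^ DIM('a)) powr (1 - p) * (ln (exp 1 + norm x)) powr p)
      else t / (1 + (t * (1 + norm x) ^ DIM('a)) powr (1 - p)))"

text \<open>Extension to the value infinity (both functions tend to infinity as t does).\<close>
definition ext_inf :: "(real \<Rightarrow> real) \<Rightarrow> ennreal \<Rightarrow> ennreal" where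
  "ext_inf F t = (if t = \<infinity> then \<infinity> else ennreal (F (enn2real t)))"

text \<open>A (possibly infinite) nonnegative function has finite Luxemburg quasi-norm iff
  the set of admissible lambda is nonempty, i.e. the infimum is finite.\<close>
definition LPhi_norm :: "real \<Rightarrow> ('a::euclidean_space \<Rightarrow> ennreal) \<Rightarrow> ennreal" where
  "LPhi_norm p g = (INF l\<in>{l::real. 0 < l \<and>
        (\<integral>\<^sup>+ x. ext_inf (PhiP p) (g x / ennreal l) \<partial>lborel) \<le> 1}. ennreal l)"

definition Lphi_norm :: "real \<Rightarrow> ('a::euclidean_space \<Rightarrow> ennreal) \<Rightarrow> ennreal" where
  "Lphi_norm p g = (INF l\<in>{l::real. 0 < l \<and>
        (\<integral>\<^sup>+ x. ext_inf (phiP p x) (g x / ennreal l) \<partial>lborel) \<le> 1}. ennreal l)"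

definition h_PhiP :: "real \<Rightarrow> ('a::euclidean_space \<Rightarrow> complex) \<Rightarrow> (('a \<Rightarrow> complex) \<Rightarrow> complex) set" where
  "h_PhiP p \<phi> = {T. tempered T \<and> LPhi_norm p (locmax T \<phi>) < \<infinity>}"

definition h_phiP :: "real \<Rightarrow> ('a::euclidean_space \<Rightarrow> complex) \<Rightarrow> (('a \<Rightarrow> complex) \<Rightarrow> complex) set" where
  "h_phiP p \<phi> = {T. tempered T \<and> Lphi_norm p (locmax T \<phi>) < \<infinity>}"

end

theory Submission
  imports Defs
begin

text \<open>The inclusion is pointwise: \<open>phiP p x t \<le> PhiP p t\<close>. For strictness take the sum T
  of Dirac masses at the points 2^j e on a coordinate axis. Choosing the scale s so that the
  bump of the dilate of \<open>\<phi>\<close> sits on a single tooth, m(T, \<phi>) stays above a fixed level on a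
  ball of fixed radius around every tooth; as the modular of \<open>PhiP p\<close> carries no weight in
  x, it diverges. Conversely, m(T, \<phi>)(x) is at most the sum over j of A(|x - 2^j e|) for a
  majorant A of all dilates with s in (0, 1), and \<open>phiP p x t \<le> t^p (1 + |x|)^(-n(1-p))\<close>.
  By p-subadditivity of \<open>t \<mapsto> t^p\<close> the j-th tooth contributes O((1 + 2^j)^(-n(1-p))) to the
  modular of \<open>phiP p\<close>, a geometric series.\<close>

section \<open>Orlicz functions and Luxemburg quasi-norms\<close>

lemma divide_one_plus_powr_mono:
  fixes s t c q :: real
  assumes "0 \<le> s" "s \<le> t" "0 \<le> c" "q \<le> 1"
  shows "s / (1 + c * s powr q) \<le> t / (1 + c * t powr q)"
proof (cases "s = 0")
  case True
  then show ?thesis using assms by (simp add: add_nonneg_pos)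
next
  case False
  then have s: "0 < s" and t: "0 < t" using assms by auto
  have "t powr (q - 1) \<le> s powr (q - 1)"
    using s assms by (intro powr_mono2') auto
  then have "s * t * t powr (q - 1) \<le> s * t * s powr (q - 1)"
    using s t by (intro mult_left_mono) auto
  then have "s * t powr q \<le> t * s powr q"
    using s t by (simp add: powr_diff field_simps)
  then have "c * (s * t powr q) \<le> c * (t * s powr q)"
    using assms(3) by (rule mult_left_mono)
  then have "s * (1 + c * t powr q) \<le> t * (1 + c * s powr q)"
    using assms(2) by (simp add: algebra_simps)
  then show ?thesis
    using s t assms by (simp add: divide_simps add_pos_nonneg)
qed

lemma PhiP_mono: "0 \<le> p \<Longrightarrow> 0 \<le> s \<Longrightarrow> s \<le> t \<Longrightarrow> PhiP p s \<le> PhiP p t"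
  using divide_one_plus_powr_mono[of s t 1 "1 - p"] unfolding PhiP_def by simp

lemma PhiP_pos: "0 < t \<Longrightarrow> 0 < PhiP p t"
  unfolding PhiP_def by (simp add: add_pos_nonneg)

text \<open>The logarithmic factor in the critical case only enlarges the weight in front of
  \<open>t powr (1 - p)\<close>; all that matters below is a lower bound for it.\<close>
lemma phiP_eq_weighted:
  fixes x :: "'a::euclidean_space"
  assumes "0 < p" "p < 1"
  obtains c where "((1 + norm x) ^ DIM('a)) powr (1 - p) \<le> c"
    "\<And>t. 0 \<le> t \<Longrightarrow> phiP p x t = t / (1 + c * t powr (1 - p))"
proof -
  define W where "W = (1 + norm x) ^ DIM('a)"
  have W1: "1 \<le> W" unfolding W_def by simp
  have Wq: "1 \<le> W powr (1 - p)" using W1 assms by (intro ge_one_powr_ge_zero) auto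
  have "1 \<le> ln (exp 1 + norm x)"
    by (subst ln_ge_iff) (auto intro: add_pos_nonneg)
  then have L: "1 \<le> ln (exp 1 + norm x) powr p" using assms by (intro ge_one_powr_ge_zero) auto
  define c where "c = (if \<exists>k::nat. real DIM('a) * (1 / p - 1) = real k
     then W powr (1 - p) * ln (exp 1 + norm x) powr p else W powr (1 - p))"
  have "W powr (1 - p) \<le> c"
    using L Wq unfolding c_def by (auto intro: order_trans[OF _ mult_left_mono[of 1]])
  moreover have "phiP p x t = t / (1 + c * t powr (1 - p))" if "0 \<le> t" for t
    using that W1 unfolding phiP_def c_def W_def by (auto simp: powr_mult mult_ac)
  ultimately show ?thesis using that unfolding W_def by blast
qed

lemma phiP_mono:
  fixes x :: "'a::euclidean_space"
  assumes "0 < p" "p < 1" "0 \<le> s" "s \<le> t"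
  shows "phiP p x s \<le> phiP p x t"
proof -
  obtain c where c: "((1 + norm x) ^ DIM('a)) powr (1 - p) \<le> c"
    "\<And>t. 0 \<le> t \<Longrightarrow> phiP p x t = t / (1 + c * t powr (1 - p))"
    using phiP_eq_weighted[OF assms(1,2)] by blast
  have "0 \<le> c" using c(1) by (meson order_trans powr_ge_zero)
  then show ?thesis using assms c(2)[of s] c(2)[of t] divide_one_plus_powr_mono[of s t c "1 - p"] by simp
qed

lemma phiP_le_PhiP:
  fixes x :: "'a::euclidean_space"
  assumes "0 < p" "p < 1" "0 \<le> t"
  shows "phiP p x t \<le> PhiP p t"
proof -
  obtain c where c: "((1 + norm x) ^ DIM('a)) powr (1 - p) \<le> c"
    "\<And>t. 0 \<le> t \<Longrightarrow> phiP p x t = t / (1 + c * t powr (1 - p))"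
    using phiP_eq_weighted[OF assms(1,2)] by blast
  have "1 \<le> ((1 + norm x) ^ DIM('a)) powr (1 - p)"
    using assms by (intro ge_one_powr_ge_zero) auto
  then have c1: "1 \<le> c" using c(1) by linarith
  then have "t powr (1 - p) \<le> c * t powr (1 - p)"
    by (simp add: mult_le_cancel_right1)
  then have "t / (1 + c * t powr (1 - p)) \<le> t / (1 + t powr (1 - p))"
    using assms c1 by (intro divide_left_mono) (auto intro!: add_pos_nonneg mult_pos_pos)
  then show ?thesis using c(2)[OF assms(3)] unfolding PhiP_def by simp
qed

lemma phiP_le_powr:
  fixes x :: "'a::euclidean_space"
  assumes "0 < p" "p < 1" "0 \<le> t"
  shows "phiP p x t \<le> t powr p * ((1 + norm x) ^ DIM('a)) powr (p - 1)"
proof -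
  define W where "W = ((1 + norm x) ^ DIM('a)) powr (1 - p)"
  have "0 < 1 + norm x" by (simp add: add_pos_nonneg)
  then have W0: "0 < W" unfolding W_def by simp
  obtain c where c: "W \<le> c" "\<And>t. 0 \<le> t \<Longrightarrow> phiP p x t = t / (1 + c * t powr (1 - p))"
    using phiP_eq_weighted[OF assms(1,2)] unfolding W_def by blast
  show ?thesis
  proof (cases "t = 0")
    case True
    then show ?thesis using c(2) by simp
  next
    case False
    then have t: "0 < t" using assms by simp
    have "W * t powr (1 - p) \<le> c * t powr (1 - p)"
      using c(1) by (rule mult_right_mono) simp
    then have le: "W * t powr (1 - p) \<le> 1 + c * t powr (1 - p)" by simp
    have pos: "0 < W * t powr (1 - p)" using W0 t by simp
    then have "0 < (1 + c * t powr (1 - p)) * (W * t powr (1 - p))"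
      using le by (metis less_le_trans mult_pos_pos)
    then have "t / (1 + c * t powr (1 - p)) \<le> t / (W * t powr (1 - p))"
      using t le by (intro divide_left_mono) auto
    also have "\<dots> = t powr p / W"
      using t W0 by (simp add: powr_diff field_simps)
    also have "\<dots> = t powr p * ((1 + norm x) ^ DIM('a)) powr (p - 1)"
      using \<open>0 < 1 + norm x\<close> unfolding W_def by (simp add: powr_minus_divide[symmetric] divide_inverse powr_minus[symmetric])
    finally show ?thesis using c(2)[OF assms(3)] by simp
  qed
qed

lemma ext_inf_mono_fun:
  assumes "\<And>t. 0 \<le> t \<Longrightarrow> F t \<le> G t"
  shows "ext_inf F v \<le> ext_inf G v"
  unfolding ext_inf_def using assms[of "enn2real v"] by (auto intro: ennreal_leI)

lemma ext_inf_PhiP_ge: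
  assumes "0 \<le> p" "0 \<le> c" "ennreal c \<le> v"
  shows "ennreal (PhiP p c) \<le> ext_inf (PhiP p) v"
proof (cases "v = \<infinity>")
  case True
  then show ?thesis unfolding ext_inf_def by simp
next
  case False
  then have "v = ennreal (enn2real v)" by (simp add: less_top)
  then have "c \<le> enn2real v"
    using assms(3) by (metis ennreal_le_iff enn2real_nonneg)
  then show ?thesis
    using False PhiP_mono[OF assms(1,2)] unfolding ext_inf_def by (simp add: ennreal_leI)
qed

lemma INF_ennreal_less_top_iff: "(INF l\<in>A. ennreal l) < \<infinity> \<longleftrightarrow> A \<noteq> {}"
proof
  assume "(INF l\<in>A. ennreal l) < \<infinity>"
  then show "A \<noteq> {}" by auto
next
  assume "A \<noteq> {}"
  then obtain l where "l \<in> A" by blast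
  then have "(INF l\<in>A. ennreal l) \<le> ennreal l" by (rule INF_lower)
  then show "(INF l\<in>A. ennreal l) < \<infinity>" by (simp add: le_less_trans)
qed

lemma LPhi_norm_less_top_iff:
  "LPhi_norm p g < \<infinity> \<longleftrightarrow> (\<exists>l>0. (\<integral>\<^sup>+ x. ext_inf (PhiP p) (g x / ennreal l) \<partial>lborel) \<le> 1)"
  unfolding LPhi_norm_def INF_ennreal_less_top_iff by auto

lemma Lphi_norm_less_top_iff:
  "Lphi_norm p g < \<infinity> \<longleftrightarrow> (\<exists>l>0. (\<integral>\<^sup>+ x. ext_inf (phiP p x) (g x / ennreal l) \<partial>lborel) \<le> 1)"
  unfolding Lphi_norm_def INF_ennreal_less_top_iff by auto

lemma h_PhiP_subset_h_phiP:
  assumes "0 < p" "p < 1"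
  shows "h_PhiP p \<phi> \<subseteq> h_phiP p \<phi>"
proof
  fix T assume T: "T \<in> h_PhiP p \<phi>"
  then obtain l where l: "0 < l"
    "(\<integral>\<^sup>+ x. ext_inf (PhiP p) (locmax T \<phi> x / ennreal l) \<partial>lborel) \<le> 1"
    using LPhi_norm_less_top_iff unfolding h_PhiP_def by blast
  have "(\<integral>\<^sup>+ x. ext_inf (phiP p x) (locmax T \<phi> x / ennreal l) \<partial>lborel)
      \<le> (\<integral>\<^sup>+ x. ext_inf (PhiP p) (locmax T \<phi> x / ennreal l) \<partial>lborel)"
    using phiP_le_PhiP[OF assms] by (intro nn_integral_mono ext_inf_mono_fun) auto
  with l have "Lphi_norm p (locmax T \<phi>) < \<infinity>"
    unfolding Lphi_norm_less_top_iff by (blast intro: order_trans)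
  with T show "T \<in> h_phiP p \<phi>"
    unfolding h_PhiP_def h_phiP_def by simp
qed

text \<open>Since \<open>PhiP p\<close> does not depend on \<open>x\<close>, a uniform lower bound on a set of infinite
  measure already rules out every dilation \<open>l\<close>.\<close>
lemma LPhi_norm_eq_top_if_ge_on_infinite:
  assumes "0 \<le> p" "S \<in> sets lborel" "emeasure lborel S = \<infinity>"
    and "0 < c" "\<And>x. x \<in> S \<Longrightarrow> ennreal c \<le> g x"
  shows "LPhi_norm p g = \<infinity>"
proof (rule ccontr)
  assume "LPhi_norm p g \<noteq> \<infinity>"
  then obtain l where l: "0 < l" "(\<integral>\<^sup>+ x. ext_inf (PhiP p) (g x / ennreal l) \<partial>lborel) \<le> 1"
    using LPhi_norm_less_top_iff[of p g] by (auto simp: top.not_eq_extremum)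
  have below: "ennreal (PhiP p (c / l)) * indicator S x \<le> ext_inf (PhiP p) (g x / ennreal l)" for x
  proof (cases "x \<in> S")
    case True
    then have "ennreal c / ennreal l \<le> g x / ennreal l"
      by (intro divide_right_mono_ennreal assms(5))
    then have "ennreal (c / l) \<le> g x / ennreal l"
      using assms(4) l(1) by (simp add: divide_ennreal)
    then have "ennreal (PhiP p (c / l)) \<le> ext_inf (PhiP p) (g x / ennreal l)"
      using assms(1,4) l(1) by (intro ext_inf_PhiP_ge) auto
    then show ?thesis using True by simp
  qed simp
  have "0 < PhiP p (c / l)" using assms(4) l(1) by (simp add: PhiP_pos)
  then have "\<infinity> = (\<integral>\<^sup>+ x. ennreal (PhiP p (c / l)) * indicator S x \<partial>lborel)"
    using assms(2,3) by (simp add: nn_integral_cmult_indicator ennreal_mult_top)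
  also have "\<dots> \<le> 1"
    using nn_integral_mono[OF below] l(2) by (rule order_trans)
  finally show False by (simp add: top_unique)
qed

section \<open>Schwartz functions\<close>

lemma schwartz_decay:
  assumes "schwartz \<phi>"
  obtains C where "\<And>x. (1 + norm x) ^ N * norm (\<phi> x) \<le> C"
  using assms unfolding schwartz_def by (metis empty_subsetI ideriv.simps(1) list.set(1))

lemma schwartz_decay_one:
  assumes "schwartz f"
  obtains C where "\<And>x. (1 + norm x) * norm (f x) \<le> C"
  using schwartz_decay[OF assms, of 1] by auto

lemma schwartz_dirderiv_bounded:
  fixes \<phi> :: "'a::euclidean_space \<Rightarrow> complex"
  assumes "schwartz \<phi>"
  obtains D where "\<And>b x. b \<in> Basis \<Longrightarrow> norm (dirderiv b \<phi> x) \<le> D"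
proof -
  have "\<exists>C. \<forall>x. norm (dirderiv b \<phi> x) \<le> C" if "b \<in> Basis" for b
  proof -
    have "\<exists>C. \<forall>x. (1 + norm x) ^ 0 * norm (ideriv [b] \<phi> x) \<le> C"
      using assms that unfolding schwartz_def by (metis empty_subsetI insert_subset list.set)
    then show ?thesis by simp
  qed
  then obtain C where C: "\<And>b x. b \<in> Basis \<Longrightarrow> norm (dirderiv b \<phi> x) \<le> C b" by metis
  have "C b \<le> (\<Sum>b\<in>Basis. \<bar>C b\<bar>)" if "b \<in> Basis" for b
  proof -
    have "C b \<le> \<bar>C b\<bar>" by simp
    also have "\<dots> \<le> (\<Sum>b\<in>Basis. \<bar>C b\<bar>)" using that by (intro member_le_sum) auto
    finally show ?thesis .
  qed
  then show ?thesis using C that by (meson order_trans)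
qed

lemma schwartz_has_vector_derivative_line:
  fixes \<phi> :: "'a::euclidean_space \<Rightarrow> complex"
  assumes "schwartz \<phi>" "b \<in> Basis"
  shows "((\<lambda>t. \<phi> (x + t *\<^sub>R b)) has_vector_derivative dirderiv b \<phi> (x + t0 *\<^sub>R b)) (at t0)"
proof -
  define y where "y = x + t0 *\<^sub>R b"
  have "(\<lambda>s. \<phi> (y + s *\<^sub>R b)) differentiable (at 0)"
    using assms unfolding schwartz_def by (metis empty_subsetI ideriv.simps(1) list.set(1))
  then have "((\<lambda>s. \<phi> (y + s *\<^sub>R b)) has_vector_derivative dirderiv b \<phi> y) (at 0)"
    unfolding dirderiv_def by (simp add: vector_derivative_works)
  then have "(((\<lambda>s. \<phi> (y + s *\<^sub>R b)) \<circ> (\<lambda>t. t - t0)) has_vector_derivative (1 *\<^sub>R dirderiv b \<phi> y)) (at t0)"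
    by (intro vector_diff_chain_at) (auto intro!: derivative_eq_intros)
  moreover have "(\<lambda>s. \<phi> (y + s *\<^sub>R b)) \<circ> (\<lambda>t. t - t0) = (\<lambda>t. \<phi> (x + t *\<^sub>R b))"
    by (auto simp: y_def fun_eq_iff algebra_simps)
  ultimately show ?thesis by (simp add: y_def)
qed

lemma schwartz_line_lipschitz:
  fixes \<phi> :: "'a::euclidean_space \<Rightarrow> complex"
  assumes "schwartz \<phi>" "b \<in> Basis" "\<And>x. norm (dirderiv b \<phi> x) \<le> D"
  shows "norm (\<phi> (x + t *\<^sub>R b) - \<phi> x) \<le> D * \<bar>t\<bar>"
proof -
  have "norm (\<phi> (x + t *\<^sub>R b) - \<phi> (x + 0 *\<^sub>R b)) \<le> D * norm (t - 0)"
  proof (rule differentiable_bound[where S = UNIV and f' = "\<lambda>s h. h *\<^sub>R dirderiv b \<phi> (x + s *\<^sub>R b)"])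
    fix s :: real
    show "((\<lambda>t. \<phi> (x + t *\<^sub>R b)) has_derivative (\<lambda>h. h *\<^sub>R dirderiv b \<phi> (x + s *\<^sub>R b))) (at s within UNIV)"
      using schwartz_has_vector_derivative_line[OF assms(1,2)]
      unfolding has_vector_derivative_def by simp
    show "onorm (\<lambda>h. h *\<^sub>R dirderiv b \<phi> (x + s *\<^sub>R b)) \<le> D"
      using onorm_scaleR_left[OF bounded_linear_ident, of "dirderiv b \<phi> (x + s *\<^sub>R b)"] assms(3)
      by (simp add: onorm_id)
  qed auto
  then show ?thesis by simp
qed

lemma schwartz_lipschitz:
  fixes \<phi> :: "'a::euclidean_space \<Rightarrow> complex"
  assumes "schwartz \<phi>"
  obtains L where "\<And>x y. norm (\<phi> y - \<phi> x) \<le> L * norm (y - x)"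
proof -
  obtain D where D: "\<And>b x. b \<in> Basis \<Longrightarrow> norm (dirderiv b \<phi> x) \<le> D"
    using schwartz_dirderiv_bounded[OF assms] by blast
  have D0: "0 \<le> D" using D[OF SOME_Basis] norm_ge_zero order.trans by blast
  have sum: "norm (\<phi> (x + (\<Sum>b\<in>B. c b *\<^sub>R b)) - \<phi> x) \<le> (\<Sum>b\<in>B. D * \<bar>c b\<bar>)"
    if "finite B" "B \<subseteq> Basis" for x c B
    using that
  proof (induction B rule: finite_induct)
    case (insert a B)
    let ?y = "x + (\<Sum>b\<in>B. c b *\<^sub>R b)"
    have "norm (\<phi> (?y + c a *\<^sub>R a) - \<phi> ?y) \<le> D * \<bar>c a\<bar>"
      using insert D by (intro schwartz_line_lipschitz[OF assms]) auto
    moreover have "x + (\<Sum>b\<in>insert a B. c b *\<^sub>R b) = ?y + c a *\<^sub>R a"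
      using insert by (simp add: algebra_simps)
    ultimately show ?case
      using insert norm_triangle_ineq[of "\<phi> (?y + c a *\<^sub>R a) - \<phi> ?y" "\<phi> ?y - \<phi> x"]
      by (simp only: sum.insert) simp
  qed simp
  have "norm (\<phi> y - \<phi> x) \<le> (D * real DIM('a)) * norm (y - x)" for x y
  proof -
    have "norm (\<phi> y - \<phi> x) \<le> (\<Sum>b\<in>Basis. D * \<bar>(y - x) \<bullet> b\<bar>)"
      using sum[of Basis x "\<lambda>b. (y - x) \<bullet> b"] by (simp add: euclidean_representation)
    also have "\<dots> \<le> (\<Sum>b\<in>(Basis::'a set). D * norm (y - x))"
      using D0 by (intro sum_mono mult_left_mono) (auto simp: Basis_le_norm)
    finally show ?thesis by (simp add: mult_ac)
  qed
  then show ?thesis using that by blast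
qed

lemma schwartz_bounded_below_near:
  fixes \<phi> :: "'a::euclidean_space \<Rightarrow> complex"
  assumes "schwartz \<phi>" "\<phi> z0 \<noteq> 0"
  obtains \<delta> where "0 < \<delta>" "\<delta> \<le> 1" "\<And>z. norm (z - z0) < \<delta> \<Longrightarrow> norm (\<phi> z0) / 2 \<le> norm (\<phi> z)"
proof -
  obtain L where L: "\<And>x y. norm (\<phi> y - \<phi> x) \<le> L * norm (y - x)"
    using schwartz_lipschitz[OF assms(1)] by blast
  define M where "M = max L 1"
  define \<delta> where "\<delta> = min 1 (norm (\<phi> z0) / (2 * M))"
  have M: "0 < M" "L \<le> M" unfolding M_def by auto
  have "norm (\<phi> z0) / 2 \<le> norm (\<phi> z)" if "norm (z - z0) < \<delta>" for z
  proof -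
    have "norm (\<phi> z0 - \<phi> z) \<le> M * norm (z0 - z)"
      using L[of z z0] mult_right_mono[OF M(2) norm_ge_zero[of "z0 - z"]]
      by (simp add: norm_minus_commute)
    also have "\<dots> \<le> M * (norm (\<phi> z0) / (2 * M))"
      using that M(1) unfolding \<delta>_def by (intro mult_left_mono) (auto simp: norm_minus_commute)
    also have "\<dots> = norm (\<phi> z0) / 2"
      using M(1) by simp
    finally show ?thesis using norm_triangle_ineq2[of "\<phi> z0" "\<phi> z"] by linarith
  qed
  moreover have "0 < \<delta>" "\<delta> \<le> 1" unfolding \<delta>_def using assms(2) M(1) by auto
  ultimately show ?thesis using that by blast
qed

section \<open>The dyadic comb\<close>

definition dyadic_point :: "nat \<Rightarrow> 'a::euclidean_space" where
  "dyadic_point j = (2 ^ j) *\<^sub>R (SOME b. b \<in> Basis)"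

definition dyadic_comb :: "('a::euclidean_space \<Rightarrow> complex) \<Rightarrow> complex" where
  "dyadic_comb f = (\<Sum>j. f (dyadic_point j))"

lemma norm_dyadic_point [simp]: "norm (dyadic_point j :: 'a::euclidean_space) = 2 ^ j"
  unfolding dyadic_point_def using norm_Basis[OF SOME_Basis] by simp

lemma norm_dyadic_point_diff:
  assumes "j \<noteq> k"
  shows "2 ^ j / 2 \<le> norm (dyadic_point j - dyadic_point k :: 'a::euclidean_space)"
proof -
  have "norm (dyadic_point j - dyadic_point k :: 'a) = \<bar>2 ^ j - 2 ^ k :: real\<bar>"
    unfolding dyadic_point_def using norm_Basis[OF SOME_Basis]
    by (simp flip: scaleR_diff_left)
  moreover have "2 ^ j / 2 \<le> \<bar>2 ^ j - 2 ^ k :: real\<bar>"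
  proof (cases "j < k")
    case True
    then have "(2::real) ^ Suc j \<le> 2 ^ k" by (intro power_increasing) auto
    then have "2 * 2 ^ j \<le> (2::real) ^ k" by simp
    moreover have "(0::real) < 2 ^ j" by simp
    ultimately have "2 ^ j / 2 \<le> (2 ^ k - 2 ^ j :: real)" by linarith
    then show ?thesis by linarith
  next
    case False
    then have "(2::real) ^ Suc k \<le> 2 ^ j" using assms by (intro power_increasing) auto
    moreover have "(0::real) < 2 ^ k" by simp
    ultimately have "2 ^ j / 2 \<le> (2 ^ j - 2 ^ k :: real)" by simp
    then show ?thesis by linarith
  qed
  ultimately show ?thesis by simp
qed

lemma norm_at_dyadic_point_le:
  fixes f :: "'a::euclidean_space \<Rightarrow> complex"
  assumes "\<And>x. (1 + norm x) * norm (f x) \<le> C"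
  shows "norm (f (dyadic_point j)) \<le> C * (1 / 2) ^ j"
proof -
  have "2 ^ j * norm (f (dyadic_point j)) \<le> (1 + 2 ^ j) * norm (f (dyadic_point j))"
    by (intro mult_right_mono) auto
  also have "\<dots> \<le> C" using assms[of "dyadic_point j"] by simp
  finally show ?thesis by (simp add: field_simps power_divide)
qed

lemma summable_norm_at_dyadic_points:
  fixes f :: "'a::euclidean_space \<Rightarrow> complex"
  assumes "\<And>x. (1 + norm x) * norm (f x) \<le> C"
  shows "summable (\<lambda>j. norm (f (dyadic_point j)))"
  using norm_at_dyadic_point_le[OF assms]
  by (intro summable_comparison_test[OF _ summable_mult[OF summable_geometric[of "1/2::real"]]]) auto

lemma summable_at_dyadic_points:
  fixes f :: "'a::euclidean_space \<Rightarrow> complex"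
  assumes "schwartz f"
  shows "summable (\<lambda>j. f (dyadic_point j))"
  using assms by (metis schwartz_decay_one summable_norm_at_dyadic_points summable_norm_cancel)

lemma norm_dyadic_comb_le:
  fixes f :: "'a::euclidean_space \<Rightarrow> complex"
  assumes "schwartz f"
  shows "norm (dyadic_comb f) \<le> 2 * sw_seminorm 1 [] f"
proof -
  define S where "S = sw_seminorm 1 [] f"
  obtain C where "\<And>x. (1 + norm x) * norm (f x) \<le> C" using schwartz_decay_one[OF assms] by blast
  then have "bdd_above (range (\<lambda>x. (1 + norm x) ^ 1 * norm (ideriv [] f x)))"
    by (auto intro!: bdd_aboveI)
  then have S: "(1 + norm x) * norm (f x) \<le> S" for x
    unfolding S_def sw_seminorm_def using cSUP_upper[of x UNIV] by force
  have sf: "summable (\<lambda>j. norm (f (dyadic_point j)))"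
    by (rule summable_norm_at_dyadic_points[OF S])
  have "norm (dyadic_comb f) \<le> (\<Sum>j. norm (f (dyadic_point j)))"
    unfolding dyadic_comb_def by (rule summable_norm[OF sf])
  also have "\<dots> \<le> (\<Sum>j. S * (1 / 2) ^ j)"
    using norm_at_dyadic_point_le[OF S] by (intro suminf_le sf summable_mult summable_geometric) auto
  also have "\<dots> = 2 * S"
    using suminf_mult[OF summable_geometric[of "1/2::real"], of S] by (simp add: suminf_geometric)
  finally show ?thesis unfolding S_def .
qed

lemma tempered_dyadic_comb: "tempered (dyadic_comb :: ('a::euclidean_space \<Rightarrow> complex) \<Rightarrow> complex)"
  unfolding tempered_def
proof (intro conjI allI impI)
  fix f g :: "'a \<Rightarrow> complex" assume "schwartz f" "schwartz g"
  then show "dyadic_comb (\<lambda>x. f x + g x) = dyadic_comb f + dyadic_comb g"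
    unfolding dyadic_comb_def by (intro suminf_add[symmetric] summable_at_dyadic_points)
next
  fix f :: "'a \<Rightarrow> complex" and c assume "schwartz f"
  then show "dyadic_comb (\<lambda>x. c * f x) = c * dyadic_comb f"
    unfolding dyadic_comb_def by (intro suminf_mult summable_at_dyadic_points)
next
  have only_nil: "{ds::'a list. set ds \<subseteq> Basis \<and> length ds \<le> 0} = {[]}" by auto
  show "\<exists>C N M. \<forall>f. schwartz f \<longrightarrow>
      norm (dyadic_comb f) \<le> C * (\<Sum>ds\<in>{ds::'a list. set ds \<subseteq> Basis \<and> length ds \<le> M}. sw_seminorm N ds f)"
  proof (intro exI allI impI)
    fix f :: "'a \<Rightarrow> complex" assume "schwartz f"
    then show "norm (dyadic_comb f)
        \<le> 2 * (\<Sum>ds\<in>{ds::'a list. set ds \<subseteq> Basis \<and> length ds \<le> 0}. sw_seminorm 1 ds f)"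
      using norm_dyadic_comb_le unfolding only_nil by simp
  qed
qed

lemma dconv_dyadic_comb: "dconv dyadic_comb \<psi> x = (\<Sum>j. \<psi> (x - dyadic_point j))"
  unfolding dconv_def dyadic_comb_def by simp

lemma norm_dilate:
  fixes \<phi> :: "'a::euclidean_space \<Rightarrow> complex"
  assumes "0 < s"
  shows "norm (dilate s \<phi> y) = norm (\<phi> ((1 / s) *\<^sub>R y)) / s ^ DIM('a)"
  using assms unfolding dilate_def by (simp add: norm_mult norm_divide norm_power)

section \<open>The comb is not in the Orlicz Hardy space\<close>

lemma norm_dilate_away_from_dyadic_point:
  fixes \<phi> :: "'a::euclidean_space \<Rightarrow> complex"
  assumes "0 < s" "\<And>y. (1 + norm y) * norm (\<phi> y) \<le> C"
    and "norm (x - dyadic_point k) \<le> 1/4" "j \<noteq> k"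
  shows "norm (dilate s \<phi> (x - dyadic_point j)) \<le> 4 * C * s / s ^ DIM('a) * (1 / 2) ^ j"
proof -
  define y where "y = (1 / s) *\<^sub>R (x - dyadic_point j)"
  have "norm (dyadic_point j - dyadic_point k :: 'a) \<le> norm (x - dyadic_point j) + norm (x - dyadic_point k)"
    using norm_triangle_ineq4[of "x - dyadic_point k" "x - dyadic_point j"] by (simp add: add.commute)
  moreover have "(1::real) \<le> 2 ^ j" by simp
  ultimately have "2 ^ j / 4 \<le> norm (x - dyadic_point j)"
    using norm_dyadic_point_diff[OF assms(4), where 'a='a] assms(3) by linarith
  then have "2 ^ j / 4 / s \<le> norm (x - dyadic_point j) / s"
    using assms(1) by (intro divide_right_mono) auto
  also have "\<dots> = norm y" unfolding y_def using assms(1) by simp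
  finally have y: "2 ^ j / 4 / s \<le> norm y" .
  have "2 ^ j / 4 / s * norm (\<phi> y) \<le> (1 + norm y) * norm (\<phi> y)"
    using y by (intro mult_right_mono) auto
  also have "\<dots> \<le> C" by (rule assms(2))
  finally have "norm (\<phi> y) \<le> 4 * C * s * (1 / 2) ^ j"
    using assms(1) by (simp add: field_simps power_divide)
  then show ?thesis
    unfolding norm_dilate[OF assms(1)] y_def[symmetric] using assms(1) by (simp add: divide_right_mono)
qed

lemma dconv_dyadic_comb_near_tooth:
  fixes \<phi> :: "'a::euclidean_space \<Rightarrow> complex"
  assumes s: "0 < s" and C: "\<And>y. (1 + norm y) * norm (\<phi> y) \<le> C"
    and x: "norm (x - dyadic_point k) \<le> 1/4"
  obtains R where "dconv dyadic_comb (dilate s \<phi>) x = dilate s \<phi> (x - dyadic_point k) + R"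
    "norm R \<le> 8 * C * s / s ^ DIM('a)"
proof -
  have "0 \<le> (1 + norm (0::'a)) * norm (\<phi> 0)" by simp
  then have "0 \<le> C" using C[of 0] by linarith
  define a where "a j = dilate s \<phi> (x - dyadic_point j)" for j
  define b where "b j = 4 * C * s / s ^ DIM('a) * (1 / 2) ^ j" for j
  define R where "R j = (if j = k then 0 else a j)" for j
  have Rb: "norm (R j) \<le> b j" for j
    using norm_dilate_away_from_dyadic_point[OF s C x, of j] \<open>0 \<le> C\<close> s
    unfolding R_def a_def b_def by auto
  have sb: "summable b" unfolding b_def by (intro summable_mult summable_geometric) auto
  have sR: "summable (\<lambda>j. norm (R j))"
    using Rb by (intro summable_comparison_test'[OF sb, of 0]) simp
  have "norm (suminf R) \<le> (\<Sum>j. norm (R j))" by (rule summable_norm[OF sR])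
  also have "\<dots> \<le> suminf b" using Rb sR sb by (rule suminf_le)
  also have "\<dots> = 8 * C * s / s ^ DIM('a)"
    unfolding b_def using suminf_mult[OF summable_geometric[of "1/2::real"], of "4 * C * s / s ^ DIM('a)"]
    by (simp add: suminf_geometric)
  finally have "norm (suminf R) \<le> 8 * C * s / s ^ DIM('a)" .
  moreover have "(\<lambda>j. (if j = k then a k else 0) + R j) sums (a k + suminf R)"
    using sums_single[of k "\<lambda>_. a k"] summable_norm_cancel[OF sR]
    by (intro sums_add) (auto simp: summable_sums)
  moreover have "(\<lambda>j. (if j = k then a k else 0) + R j) = a" by (auto simp: R_def)
  ultimately show ?thesis
    using that[of "suminf R"] unfolding dconv_dyadic_comb a_def by (simp add: sums_iff)
qed

lemma locmax_dyadic_comb_ge: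
  fixes \<phi> :: "'a::euclidean_space \<Rightarrow> complex"
  assumes s: "0 < s" "s < 1" and C: "\<And>y. (1 + norm y) * norm (\<phi> y) \<le> C"
    and x: "norm (x - dyadic_point k) \<le> 1/4"
    and \<epsilon>: "\<epsilon> \<le> norm (\<phi> ((1 / s) *\<^sub>R (x - dyadic_point k)))" "8 * C * s \<le> \<epsilon> / 2"
  shows "ennreal (\<epsilon> / 2) \<le> locmax dyadic_comb \<phi> x"
proof -
  obtain R where R: "dconv dyadic_comb (dilate s \<phi>) x = dilate s \<phi> (x - dyadic_point k) + R"
    "norm R \<le> 8 * C * s / s ^ DIM('a)"
    using dconv_dyadic_comb_near_tooth[OF s(1) C x] by blast
  have "norm R \<le> \<epsilon> / 2 / s ^ DIM('a)"
    using R(2) \<epsilon>(2) s(1) by (smt (verit) divide_right_mono zero_less_power)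
  moreover have "\<epsilon> / s ^ DIM('a) \<le> norm (dilate s \<phi> (x - dyadic_point k))"
    unfolding norm_dilate[OF s(1)] using \<epsilon>(1) s(1) by (simp add: divide_right_mono)
  moreover have "norm (dilate s \<phi> (x - dyadic_point k)) - norm R \<le> norm (dconv dyadic_comb (dilate s \<phi>) x)"
    unfolding R(1) using norm_triangle_ineq2[of "dilate s \<phi> (x - dyadic_point k)" "- R"] by simp
  moreover have "0 \<le> \<epsilon>"
    using order_trans[OF norm_ge_zero \<open>norm R \<le> \<epsilon> / 2 / s ^ DIM('a)\<close>] zero_less_power[OF s(1), of "DIM('a)"]
    by (auto simp: zero_le_divide_iff)
  then have "\<epsilon> / 2 / 1 \<le> \<epsilon> / 2 / s ^ DIM('a)"
    using s by (intro divide_left_mono) (auto simp: power_le_one)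
  ultimately have "ennreal (\<epsilon> / 2) \<le> ennreal (norm (dconv dyadic_comb (dilate s \<phi>) x))"
    by (intro ennreal_leI) (simp add: field_simps)
  also have "\<dots> \<le> locmax dyadic_comb \<phi> x"
    unfolding locmax_def using s by (intro SUP_upper) auto
  finally show ?thesis .
qed

lemma emeasure_UN_disjoint_balls:
  fixes a :: "nat \<Rightarrow> 'a::euclidean_space"
  assumes "0 < r" "disjoint_family (\<lambda>k. ball (a k) r)"
  shows "emeasure lborel (\<Union>k. ball (a k) r) = \<infinity>"
proof -
  define m where "m = unit_ball_vol (DIM('a)) * r ^ DIM('a)"
  have "0 < m" unfolding m_def using assms(1) by simp
  then have "\<not> summable (\<lambda>_::nat. m)" by (simp add: summable_const_iff)
  then have "(\<Sum>k::nat. ennreal m) = \<infinity>"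
    using \<open>0 < m\<close> by (simp add: summable_iff_suminf_neq_top)
  moreover have "emeasure lborel (ball (a k) r) = ennreal m" for k
    unfolding m_def using assms(1) by (intro emeasure_ball) simp
  moreover have "(\<Sum>k. emeasure lborel (ball (a k) r)) = emeasure lborel (\<Union>k. ball (a k) r)"
    using assms(2) by (intro suminf_emeasure) auto
  ultimately show ?thesis by simp
qed

lemma norm_diff_dyadic_point_less:
  fixes w :: "'a::euclidean_space"
  assumes "x \<in> ball (dyadic_point k + w) r"
  shows "norm (x - dyadic_point k) < norm w + r"
  using assms norm_triangle_ineq[of "x - dyadic_point k - w" w]
  by (simp add: dist_norm norm_minus_commute diff_diff_eq)

lemma disjoint_family_dyadic_balls:
  fixes w :: "'a::euclidean_space"
  assumes "norm w + r \<le> 1/4"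
  shows "disjoint_family (\<lambda>k. ball (dyadic_point k + w) r)"
  unfolding disjoint_family_on_def
proof (intro ballI impI)
  fix j k :: nat assume "j \<noteq> k"
  show "ball (dyadic_point j + w) r \<inter> ball (dyadic_point k + w) r = {}"
  proof (rule ccontr)
    assume "ball (dyadic_point j + w) r \<inter> ball (dyadic_point k + w) r \<noteq> {}"
    then obtain x where x: "x \<in> ball (dyadic_point j + w) r" "x \<in> ball (dyadic_point k + w) r" by blast
    have "norm (dyadic_point j - dyadic_point k :: 'a) \<le> norm (x - dyadic_point j) + norm (x - dyadic_point k)"
      using norm_triangle_ineq4[of "x - dyadic_point k" "x - dyadic_point j"] by (simp add: add.commute)
    moreover have "(1::real) \<le> 2 ^ j" by simp
    ultimately show False
      using norm_diff_dyadic_point_less[OF x(1)] norm_diff_dyadic_point_less[OF x(2)] assms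
        norm_dyadic_point_diff[OF \<open>j \<noteq> k\<close>, where 'a='a] by linarith
  qed
qed

text \<open>At the scale \<open>s\<close> chosen below, the dilate centred at \<open>x\<close> picks up the bump of \<open>\<phi>\<close>
  near \<open>z0\<close> from the single tooth \<open>dyadic_point k\<close> whenever \<open>x\<close> lies in the ball of radius
  \<open>s \<delta>\<close> around \<open>dyadic_point k + s z0\<close>.\<close>
lemma dyadic_comb_notin_h_PhiP:
  fixes \<phi> :: "'a::euclidean_space \<Rightarrow> complex"
  assumes "0 \<le> p" "schwartz \<phi>" "\<phi> \<noteq> (\<lambda>_. 0)"
  shows "dyadic_comb \<notin> h_PhiP p \<phi>"
proof -
  obtain z0 where z0: "\<phi> z0 \<noteq> 0" using assms(3) by blast
  define \<epsilon> where "\<epsilon> = norm (\<phi> z0) / 2"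
  have "0 < \<epsilon>" unfolding \<epsilon>_def using z0 by simp
  obtain \<delta> where \<delta>: "0 < \<delta>" "\<delta> \<le> 1" "\<And>z. norm (z - z0) < \<delta> \<Longrightarrow> \<epsilon> \<le> norm (\<phi> z)"
    using schwartz_bounded_below_near[OF assms(2) z0] unfolding \<epsilon>_def by blast
  obtain C where C: "\<And>y. (1 + norm y) * norm (\<phi> y) \<le> C"
    using schwartz_decay_one[OF assms(2)] by blast
  have small: "\<forall>\<^sub>F s in at_right 0. s * c < d" if "0 < d" for c d :: real
    using that by (intro order_tendstoD(2)[of "\<lambda>s. s * c" 0]) (auto intro!: tendsto_eq_intros)
  have "\<forall>\<^sub>F s in at_right 0. 0 < s \<and> s * 1 < 1 \<and> s * (norm z0 + 1) < 1/4 \<and> s * (8 * C) < \<epsilon> / 2"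
    using \<open>0 < \<epsilon>\<close> by (intro eventually_conj eventually_at_right_less small) auto
  then obtain s where s: "0 < s" "s < 1" "s * (norm z0 + 1) < 1/4" "8 * C * s \<le> \<epsilon> / 2"
    using eventually_happens[of _ "at_right (0::real)"] by (force simp: mult_ac)
  define B where "B k = ball (dyadic_point k + s *\<^sub>R z0) (s * \<delta>)" for k
  have "s * \<delta> \<le> s" using \<delta>(2) s(1) by (intro mult_left_le) auto
  moreover have "norm (s *\<^sub>R z0) = s * norm z0" using s(1) by simp
  moreover have "s * (norm z0 + 1) = s * norm z0 + s" by (simp add: algebra_simps)
  ultimately have radius: "norm (s *\<^sub>R z0) + s * \<delta> \<le> 1/4" using s(3) by linarith
  have "ennreal (\<epsilon> / 2) \<le> locmax dyadic_comb \<phi> x" if "x \<in> B k" for x k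
  proof (rule locmax_dyadic_comb_ge[OF s(1,2) C _ _ s(4)])
    show "norm (x - dyadic_point k) \<le> 1/4"
      using norm_diff_dyadic_point_less[of x k] that radius unfolding B_def by fastforce
    have "(1 / s) *\<^sub>R (x - dyadic_point k) - z0 = (1 / s) *\<^sub>R (x - (dyadic_point k + s *\<^sub>R z0))"
      using s(1) by (simp add: algebra_simps)
    then have "norm ((1 / s) *\<^sub>R (x - dyadic_point k) - z0) = norm (x - (dyadic_point k + s *\<^sub>R z0)) / s"
      using s(1) by simp
    also have "\<dots> < \<delta>"
      using that s(1) unfolding B_def by (simp add: dist_norm norm_minus_commute field_simps)
    finally show "\<epsilon> \<le> norm (\<phi> ((1 / s) *\<^sub>R (x - dyadic_point k)))" by (rule \<delta>(3))
  qed
  moreover have "emeasure lborel (\<Union>k. B k) = \<infinity>"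
    unfolding B_def using s(1) \<delta>(1) radius
    by (intro emeasure_UN_disjoint_balls disjoint_family_dyadic_balls) auto
  moreover have "(\<Union>k. B k) \<in> sets lborel" unfolding B_def by auto
  ultimately have "LPhi_norm p (locmax dyadic_comb \<phi>) = \<infinity>"
    using assms(1) \<open>0 < \<epsilon>\<close> by (intro LPhi_norm_eq_top_if_ge_on_infinite[of p _ "\<epsilon> / 2"]) auto
  then show ?thesis unfolding h_PhiP_def by simp
qed

section \<open>The comb is in the Musielak-Orlicz Hardy space\<close>

lemma powr_add_le_add_powr:
  fixes x y p :: real
  assumes "0 \<le> x" "0 \<le> y" "0 < p" "p \<le> 1"
  shows "(x + y) powr p \<le> x powr p + y powr p"
proof (cases "x + y = 0")
  case True
  then show ?thesis using assms by simp
next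
  case False
  then have s: "0 < x + y" using assms by simp
  have "x / (x + y) \<le> (x / (x + y)) powr p" "y / (x + y) \<le> (y / (x + y)) powr p"
    using powr_mono'[of p 1 "x / (x + y)"] powr_mono'[of p 1 "y / (x + y)"] assms s by auto
  then have "x / (x + y) + y / (x + y) \<le> x powr p / (x + y) powr p + y powr p / (x + y) powr p"
    using assms by (simp add: powr_divide)
  then have "1 \<le> (x powr p + y powr p) / (x + y) powr p"
    using s by (simp add: add_divide_distrib[symmetric])
  then show ?thesis using s by (simp add: divide_simps split: if_splits)
qed

lemma powr_sum_le_sum_powr:
  fixes a :: "nat \<Rightarrow> real"
  assumes "\<And>j. 0 \<le> a j" "0 < p" "p \<le> 1"
  shows "(\<Sum>j<m. a j) powr p \<le> (\<Sum>j<m. a j powr p)"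
proof (induction m)
  case (Suc m)
  have "(\<Sum>j<Suc m. a j) powr p \<le> (\<Sum>j<m. a j) powr p + a m powr p"
    using powr_add_le_add_powr[of "\<Sum>j<m. a j" "a m" p] assms by (simp add: sum_nonneg)
  then show ?case using Suc by simp
qed simp

lemma powr_suminf_le_suminf_powr:
  fixes a :: "nat \<Rightarrow> real"
  assumes "\<And>j. 0 \<le> a j" "0 < p" "p \<le> 1" "summable a" "summable (\<lambda>j. a j powr p)"
  shows "(\<Sum>j. a j) powr p \<le> (\<Sum>j. a j powr p)"
proof (cases "(\<Sum>j. a j) = 0")
  case True
  then show ?thesis using suminf_nonneg[OF assms(5)] by simp
next
  case False
  have "(\<lambda>m. (\<Sum>j<m. a j) powr p) \<longlonglongrightarrow> (\<Sum>j. a j) powr p"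
    using assms(2) False by (intro tendsto_powr summable_LIMSEQ assms(4)) auto
  moreover have "(\<Sum>j<m. a j) powr p \<le> (\<Sum>j. a j powr p)" for m
  proof -
    have "(\<Sum>j<m. a j) powr p \<le> (\<Sum>j<m. a j powr p)" by (rule powr_sum_le_sum_powr[OF assms(1-3)])
    also have "\<dots> \<le> (\<Sum>j. a j powr p)" by (rule sum_le_suminf[OF assms(5)]) auto
    finally show ?thesis .
  qed
  ultimately show ?thesis by (intro LIMSEQ_le_const2) auto
qed

lemma summable_if_summable_powr:
  fixes a :: "nat \<Rightarrow> real"
  assumes "\<And>j. 0 \<le> a j" "0 < p" "p \<le> 1" "summable (\<lambda>j. a j powr p)"
  shows "summable a"
proof (rule summable_comparison_test_ev[OF _ assms(4)])
  have "(\<lambda>j. a j powr p) \<longlonglongrightarrow> 0" by (rule summable_LIMSEQ_zero[OF assms(4)])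
  then have "\<forall>\<^sub>F j in sequentially. a j powr p < 1" by (rule order_tendstoD) simp
  then show "\<forall>\<^sub>F j in sequentially. norm (a j) \<le> a j powr p"
  proof eventually_elim
    case (elim j)
    have "a j \<le> 1"
    proof (rule ccontr)
      assume "\<not> a j \<le> 1"
      then have "1 \<le> a j powr p" using assms(2) by (intro ge_one_powr_ge_zero) auto
      then show False using elim by simp
    qed
    then have "a j powr 1 \<le> a j powr p"
      using assms(1-3) by (intro powr_mono') auto
    then show ?case using assms(1)[of j] by (cases "a j = 0") auto
  qed
qed

lemma dilation_factor_le:
  fixes s r :: real
  assumes "0 < s" "s < 1" "0 < r" "n \<le> N"
  shows "(1 / s ^ n) / (1 + r / s) ^ N \<le> 1 / r ^ n" "(1 / s ^ n) / (1 + r / s) ^ N \<le> 1 / r ^ N"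
proof -
  have sr: "0 < s + r" using assms by simp
  have "(1 + r / s) ^ N = (s + r) ^ N / s ^ N" using assms by (simp add: power_divide field_simps)
  moreover have "s ^ N = s ^ (N - n) * s ^ n" using assms(4) by (simp add: power_add[symmetric])
  ultimately have eq: "(1 / s ^ n) / (1 + r / s) ^ N = s ^ (N - n) / (s + r) ^ N"
    using assms sr by (simp add: field_simps)
  have "s ^ (N - n) * r ^ n \<le> (s + r) ^ (N - n) * (s + r) ^ n"
    using assms by (intro mult_mono power_mono) auto
  also have "\<dots> = (s + r) ^ N" using assms(4) by (simp add: power_add[symmetric])
  finally show "(1 / s ^ n) / (1 + r / s) ^ N \<le> 1 / r ^ n"
    unfolding eq using assms sr by (simp add: field_simps)
  have "s ^ (N - n) * r ^ N \<le> 1 * (s + r) ^ N"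
    using assms by (intro mult_mono power_mono) (auto simp: power_le_one)
  then show "(1 / s ^ n) / (1 + r / s) ^ N \<le> 1 / r ^ N"
    unfolding eq using assms sr by (simp add: field_simps)
qed

text \<open>A bound for \<open>dilate s \<phi> y\<close> uniform in \<open>s \<in> (0, 1)\<close>, for \<open>\<phi>\<close> decaying like
  \<open>(1 + norm y) ^ (-N)\<close>.\<close>
definition dilate_majorant :: "real \<Rightarrow> nat \<Rightarrow> nat \<Rightarrow> real \<Rightarrow> real" where
  "dilate_majorant C n N r = C * (if r \<le> 1 then r powr (- real n) else r powr (- real N))"

lemma dilate_majorant_nonneg: "0 \<le> C \<Longrightarrow> 0 \<le> dilate_majorant C n N r"
  unfolding dilate_majorant_def by simp

lemma dilate_majorant_measurable [measurable]: "dilate_majorant C n N \<in> borel_measurable borel"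
  unfolding dilate_majorant_def by measurable

lemma decay_bound_nonneg:
  fixes \<phi> :: "'a::real_normed_vector \<Rightarrow> 'b::real_normed_vector"
  assumes "\<And>z. (1 + norm z) ^ N * norm (\<phi> z) \<le> C"
  shows "0 \<le> C"
proof -
  have "0 \<le> (1 + norm (0::'a)) ^ N * norm (\<phi> 0)" by simp
  then show ?thesis using assms[of 0] by linarith
qed

lemma norm_dilate_le_majorant:
  fixes \<phi> :: "'a::euclidean_space \<Rightarrow> complex"
  assumes s: "0 < s" "s < 1" and N: "DIM('a) \<le> N"
    and C: "\<And>z. (1 + norm z) ^ N * norm (\<phi> z) \<le> C" and y: "y \<noteq> 0"
  shows "norm (dilate s \<phi> y) \<le> dilate_majorant C DIM('a) N (norm y)"
proof -
  define r where "r = norm y"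
  have r: "0 < r" using y unfolding r_def by simp
  have pos: "0 < (1 + r / s) ^ N" using r s by (simp add: add_pos_pos)
  have "(1 + r / s) ^ N * norm (\<phi> ((1 / s) *\<^sub>R y)) \<le> C"
    using C[of "(1 / s) *\<^sub>R y"] s unfolding r_def by simp
  then have "norm (\<phi> ((1 / s) *\<^sub>R y)) \<le> C / (1 + r / s) ^ N"
    using pos by (simp add: field_simps)
  then have "norm (dilate s \<phi> y) \<le> C / (1 + r / s) ^ N / s ^ DIM('a)"
    unfolding norm_dilate[OF s(1)] using s by (intro divide_right_mono) auto
  also have "\<dots> = C * ((1 / s ^ DIM('a)) / (1 + r / s) ^ N)" by simp
  also have "\<dots> \<le> dilate_majorant C DIM('a) N r"
    using mult_left_mono[OF dilation_factor_le(1)[OF s r N] decay_bound_nonneg[OF C]]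
      mult_left_mono[OF dilation_factor_le(2)[OF s r N] decay_bound_nonneg[OF C]] r
    unfolding dilate_majorant_def by (simp add: powr_minus powr_realpow divide_inverse)
  finally show ?thesis unfolding r_def .
qed

lemma locmax_dyadic_comb_le:
  fixes \<phi> :: "'a::euclidean_space \<Rightarrow> complex"
  assumes N: "DIM('a) \<le> N" and C: "\<And>z. (1 + norm z) ^ N * norm (\<phi> z) \<le> C"
    and x: "x \<notin> range dyadic_point"
    and A: "summable (\<lambda>j. dilate_majorant C DIM('a) N (norm (x - dyadic_point j)))"
  shows "locmax dyadic_comb \<phi> x \<le> ennreal (\<Sum>j. dilate_majorant C DIM('a) N (norm (x - dyadic_point j)))"
  unfolding locmax_def
proof (rule SUP_least)
  fix s :: real assume "s \<in> {0<..<1}"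
  then have s: "0 < s" "s < 1" by auto
  have le: "norm (dilate s \<phi> (x - dyadic_point j)) \<le> dilate_majorant C DIM('a) N (norm (x - dyadic_point j))" for j
    using x by (intro norm_dilate_le_majorant[OF s N C]) auto
  then have sn: "summable (\<lambda>j. norm (dilate s \<phi> (x - dyadic_point j)))"
    by (intro summable_comparison_test'[OF A, of 0]) simp
  have "norm (dconv dyadic_comb (dilate s \<phi>) x) \<le> (\<Sum>j. norm (dilate s \<phi> (x - dyadic_point j)))"
    unfolding dconv_dyadic_comb by (rule summable_norm[OF sn])
  also have "\<dots> \<le> (\<Sum>j. dilate_majorant C DIM('a) N (norm (x - dyadic_point j)))"
    by (rule suminf_le[OF le sn A])
  finally show "ennreal (norm (dconv dyadic_comb (dilate s \<phi>) x))
      \<le> ennreal (\<Sum>j. dilate_majorant C DIM('a) N (norm (x - dyadic_point j)))"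
    by (rule ennreal_leI)
qed

lemma phiP_le_suminf_powr:
  fixes x :: "'a::euclidean_space"
  assumes p: "0 < p" "p < 1" and A: "\<And>j. 0 \<le> A j" "summable (\<lambda>j. A j powr p)"
    and l: "0 < l" and t: "0 \<le> t" "t \<le> suminf A / l"
  shows "phiP p x t \<le> l powr (- p) * (\<Sum>j. A j powr p * ((1 + norm x) ^ DIM('a)) powr (p - 1))"
proof -
  define W where "W = ((1 + norm x) ^ DIM('a)) powr (p - 1)"
  have "0 < 1 + norm x" by (simp add: add_pos_nonneg)
  then have W0: "0 < W" unfolding W_def by simp
  have sA: "summable A" using p(2) by (intro summable_if_summable_powr[OF A(1) p(1) _ A(2)]) simp
  have "phiP p x t \<le> phiP p x (suminf A / l)"
    using t by (intro phiP_mono[OF p]) auto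
  also have "\<dots> \<le> (suminf A / l) powr p * W" unfolding W_def
    using l suminf_nonneg[OF sA A(1)] by (intro phiP_le_powr[OF p]) auto
  also have "\<dots> = l powr (- p) * suminf A powr p * W"
    using l suminf_nonneg[OF sA A(1)] by (simp add: powr_divide powr_minus field_simps)
  also have "\<dots> \<le> l powr (- p) * (\<Sum>j. A j powr p) * W"
    using powr_suminf_le_suminf_powr[OF A(1) p(1) _ sA A(2)] p W0
    by (intro mult_left_mono mult_right_mono) auto
  also have "\<dots> = l powr (- p) * (\<Sum>j. A j powr p * W)"
    using suminf_mult2[OF A(2), of W] by simp
  finally show ?thesis unfolding W_def .
qed

lemma ext_inf_phiP_locmax_dyadic_comb_le:
  fixes \<phi> :: "'a::euclidean_space \<Rightarrow> complex"
  assumes p: "0 < p" "p < 1" and N: "DIM('a) \<le> N"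
    and C: "\<And>z. (1 + norm z) ^ N * norm (\<phi> z) \<le> C" and x: "x \<notin> range dyadic_point" and l: "0 < l"
  shows "ext_inf (phiP p x) (locmax dyadic_comb \<phi> x / ennreal l)
     \<le> ennreal (l powr (- p)) * (\<Sum>j. ennreal (dilate_majorant C DIM('a) N (norm (x - dyadic_point j)) powr p
          * ((1 + norm x) ^ DIM('a)) powr (p - 1)))"
    (is "?L \<le> ennreal ?lp * ?S")
proof -
  define A where "A j = dilate_majorant C DIM('a) N (norm (x - dyadic_point j))" for j
  define W where "W = ((1 + norm x) ^ DIM('a)) powr (p - 1)"
  have A0: "0 \<le> A j" for j unfolding A_def by (rule dilate_majorant_nonneg[OF decay_bound_nonneg[OF C]])
  have W0: "0 \<le> W" unfolding W_def by simp
  show ?thesis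
  proof (cases "?S = \<infinity>")
    case True
    then show ?thesis using l by (simp add: ennreal_mult_top)
  next
    case False
    have nn: "0 \<le> A j powr p * W" for j using W0 by simp
    have sAW: "summable (\<lambda>j. A j powr p * W)"
      using False unfolding A_def W_def by (intro summable_suminf_not_top) auto
    have "0 < 1 + norm x" by (simp add: add_pos_nonneg)
    then have sAp: "summable (\<lambda>j. A j powr p)"
      using summable_mult[OF sAW, of "1 / W"] unfolding W_def by simp
    have sA: "summable A" using p(2) by (intro summable_if_summable_powr[OF A0 p(1) _ sAp]) simp
    have "locmax dyadic_comb \<phi> x / ennreal l \<le> ennreal (suminf A) / ennreal l"
      using locmax_dyadic_comb_le[OF N C x sA[unfolded A_def]] unfolding A_def
      by (rule divide_right_mono_ennreal)
    also have "\<dots> = ennreal (suminf A / l)"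
      using l suminf_nonneg[OF sA A0] by (simp add: divide_ennreal)
    finally have v: "locmax dyadic_comb \<phi> x / ennreal l \<le> ennreal (suminf A / l)" .
    then have "enn2real (locmax dyadic_comb \<phi> x / ennreal l) \<le> suminf A / l"
      using l suminf_nonneg[OF sA A0] by (simp add: enn2real_leI)
    then have "phiP p x (enn2real (locmax dyadic_comb \<phi> x / ennreal l)) \<le> ?lp * (\<Sum>j. A j powr p * W)"
      unfolding W_def by (intro phiP_le_suminf_powr[OF p A0 sAp l]) auto
    moreover have "locmax dyadic_comb \<phi> x / ennreal l \<noteq> \<infinity>"
      using v by (auto simp: top_unique)
    ultimately have "?L \<le> ennreal (?lp * (\<Sum>j. A j powr p * W))"
      unfolding ext_inf_def by (simp add: ennreal_leI)
    also have "\<dots> = ennreal ?lp * ?S"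
      unfolding A_def W_def using suminf_nonneg[OF sAW nn] suminf_ennreal2[OF nn sAW]
      by (simp add: A_def W_def ennreal_mult)
    finally show ?thesis .
  qed
qed

definition coord_weight :: "real \<Rightarrow> real \<Rightarrow> real" where
  "coord_weight p u = \<bar>u\<bar> powr (- p) * (1 + \<bar>u\<bar>) powr (- 2)"

lemma coord_weight_nonneg: "0 \<le> coord_weight p u"
  unfolding coord_weight_def by simp

lemma coord_weight_measurable [measurable]: "coord_weight p \<in> borel_measurable borel"
  unfolding coord_weight_def by measurable

definition coord_weight_majorant :: "real \<Rightarrow> real \<Rightarrow> ennreal" where
  "coord_weight_majorant p u =
     ennreal (u powr (- p)) * indicator {0..1} u + ennreal (u powr (- 2)) * indicator {1..} u"

lemma coord_weight_majorant_measurable [measurable]: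
  "coord_weight_majorant p \<in> borel_measurable borel"
  unfolding coord_weight_majorant_def by measurable

lemma coord_weight_le_majorant_abs:
  assumes "0 < p"
  shows "ennreal (coord_weight p u) \<le> coord_weight_majorant p \<bar>u\<bar>"
proof (cases "\<bar>u\<bar> \<le> 1")
  case True
  have "(1 + \<bar>u\<bar>) powr (- 2) \<le> 1 powr (- 2)" by (intro powr_mono2') auto
  then have "coord_weight p u \<le> \<bar>u\<bar> powr (- p) * 1"
    unfolding coord_weight_def by (intro mult_left_mono) auto
  then show ?thesis
    using True unfolding coord_weight_majorant_def by (simp add: ennreal_leI add_increasing2)
next
  case False
  have "\<bar>u\<bar> powr (- p) \<le> 1 powr (- p)" using False assms by (intro powr_mono2') auto
  moreover have "(1 + \<bar>u\<bar>) powr (- 2) \<le> \<bar>u\<bar> powr (- 2)" using False by (intro powr_mono2') auto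
  ultimately have "coord_weight p u \<le> 1 * \<bar>u\<bar> powr (- 2)"
    unfolding coord_weight_def by (intro mult_mono) auto
  then show ?thesis
    using False unfolding coord_weight_majorant_def by (simp add: ennreal_leI)
qed

lemma nn_integral_coord_weight_majorant:
  assumes "0 < p" "p < 1"
  shows "(\<integral>\<^sup>+ u. coord_weight_majorant p u \<partial>lborel) = ennreal (1 / (1 - p)) + ennreal 1"
proof -
  have "((\<lambda>u. u powr (- p)) has_integral (1 powr (- p + 1) / (- p + 1))) {0..1}"
    using assms by (intro has_integral_powr_from_0) auto
  then have i1: "((\<lambda>u. u powr (- p)) has_integral (1 / (1 - p))) {0..1}" by simp
  have "((\<lambda>u. u powr (- 2)) has_integral (- (1 powr (- 2 + 1)) / (- 2 + 1))) {1::real..}"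
    by (intro has_integral_powr_to_inf) auto
  then have i2: "((\<lambda>u. u powr (- 2)) has_integral 1) {1::real..}" by simp
  have "(\<integral>\<^sup>+ u. coord_weight_majorant p u \<partial>lborel)
      = (\<integral>\<^sup>+ u. ennreal (u powr (- p)) * indicator {0..1} u \<partial>lborel)
        + (\<integral>\<^sup>+ u. ennreal (u powr (- 2)) * indicator {1..} u \<partial>lborel)"
    unfolding coord_weight_majorant_def by (rule nn_integral_add) auto
  also have "\<dots> = ennreal (1 / (1 - p)) + ennreal 1"
    using nn_integral_has_integral_lebesgue'[OF _ i1] nn_integral_has_integral_lebesgue'[OF _ i2] by simp
  finally show ?thesis .
qed

lemma nn_integral_coord_weight_finite:
  assumes "0 < p" "p < 1"
  shows "(\<integral>\<^sup>+ u. ennreal (coord_weight p u) \<partial>lborel) < \<infinity>"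
proof -
  have "ennreal (coord_weight p u) \<le> coord_weight_majorant p u + coord_weight_majorant p (- u)" for u
    using coord_weight_le_majorant_abs[OF assms(1), of u]
    by (cases "0 \<le> u") (auto elim: order_trans intro: add_increasing add_increasing2)
  then have "(\<integral>\<^sup>+ u. ennreal (coord_weight p u) \<partial>lborel)
      \<le> (\<integral>\<^sup>+ u. coord_weight_majorant p u + coord_weight_majorant p (- u) \<partial>lborel)"
    by (intro nn_integral_mono)
  also have "\<dots> = (\<integral>\<^sup>+ u. coord_weight_majorant p u \<partial>lborel) + (\<integral>\<^sup>+ u. coord_weight_majorant p (- u) \<partial>lborel)"
    by (rule nn_integral_add) auto
  also have "(\<integral>\<^sup>+ u. coord_weight_majorant p (- u) \<partial>lborel) = (\<integral>\<^sup>+ u. coord_weight_majorant p u \<partial>lborel)"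
    using nn_integral_real_affine[of "coord_weight_majorant p" "-1" 0] by simp
  finally show ?thesis
    unfolding nn_integral_coord_weight_majorant[OF assms] by (simp add: le_less_trans)
qed

lemma one_plus_norm_diff_le:
  fixes x y :: "'a::real_normed_vector"
  shows "1 + norm y \<le> (1 + norm x) * (1 + norm (x - y))"
proof -
  have "norm y \<le> norm x + norm (x - y)" using norm_triangle_ineq4[of x "x - y"] by simp
  moreover have "0 \<le> norm x * norm (x - y)" by simp
  moreover have "(1 + norm x) * (1 + norm (x - y)) = 1 + norm x + norm (x - y) + norm x * norm (x - y)"
    by (simp add: algebra_simps)
  ultimately show ?thesis by linarith
qed

lemma prod_coord_weight_ge:
  fixes y :: "'a::euclidean_space"
  assumes "0 \<le> p" "\<forall>b\<in>Basis. y \<bullet> b \<noteq> 0"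
  shows "norm y powr (- real DIM('a) * p) * (1 + norm y) powr (- 2 * real DIM('a))
    \<le> (\<Prod>b\<in>Basis. coord_weight p (y \<bullet> b))"
proof -
  have "y \<noteq> 0" using assms(2) nonempty_Basis by fastforce
  then have r: "0 < norm y" by simp
  have "norm y powr (- p) * (1 + norm y) powr (- 2) \<le> coord_weight p (y \<bullet> b)" if "b \<in> Basis" for b
  proof -
    have yb: "0 < \<bar>y \<bullet> b\<bar>" "\<bar>y \<bullet> b\<bar> \<le> norm y" using assms(2) that Basis_le_norm[OF that] by auto
    have "norm y powr (- p) \<le> \<bar>y \<bullet> b\<bar> powr (- p)" using yb assms(1) by (intro powr_mono2') auto
    moreover have "(1 + norm y) powr (- 2) \<le> (1 + \<bar>y \<bullet> b\<bar>) powr (- 2)" using yb by (intro powr_mono2') auto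
    ultimately show ?thesis unfolding coord_weight_def by (intro mult_mono) auto
  qed
  then have "(\<Prod>b\<in>(Basis::'a set). norm y powr (- p) * (1 + norm y) powr (- 2))
      \<le> (\<Prod>b\<in>Basis. coord_weight p (y \<bullet> b))"
    by (intro prod_mono) auto
  moreover have "(\<Prod>b\<in>(Basis::'a set). norm y powr (- p) * (1 + norm y) powr (- 2))
      = norm y powr (- real DIM('a) * p) * (1 + norm y) powr (- 2 * real DIM('a))"
    using r add_pos_nonneg[OF zero_less_one norm_ge_zero[of y]]
    by (simp add: power_mult_distrib powr_power mult_ac)
  ultimately show ?thesis by simp
qed

text \<open>The weight \<open>(1 + r) powr (n * (1 - p))\<close> is absorbed: near \<open>0\<close> it is bounded, and at
  infinity the \<open>p\<close>-th power of the fast decay \<open>r powr (- N)\<close> beats it once \<open>3 n \<le> N p\<close>.\<close>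
lemma dilate_majorant_powr_weight_le:
  fixes r :: real
  assumes p: "0 < p" "p < 1" and N: "3 * real n \<le> real N * p" and "0 \<le> C" "0 < r"
  shows "dilate_majorant C n N r powr p * (1 + r) powr (real n * (1 - p))
    \<le> C powr p * 2 powr (real n * (3 - p)) * (r powr (- real n * p) * (1 + r) powr (- 2 * real n))"
proof -
  define E where "E = real n * (3 - p)"
  define T where "T = (if r \<le> 1 then r powr (- real n) else r powr (- real N))"
  have E0: "0 \<le> E" unfolding E_def using p by simp
  have T0: "0 \<le> T" unfolding T_def by simp
  have split: "(1 + r) powr (real n * (1 - p)) = (1 + r) powr E * (1 + r) powr (- 2 * real n)"
    unfolding E_def by (simp add: powr_add[symmetric] algebra_simps)
  have main: "T powr p * (1 + r) powr E \<le> 2 powr E * r powr (- real n * p)"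
  proof (cases "r \<le> 1")
    case True
    then have "T powr p = r powr (- real n * p)" unfolding T_def by (simp add: powr_powr)
    moreover have "(1 + r) powr E \<le> 2 powr E" using True assms(5) E0 by (intro powr_mono2) auto
    ultimately show ?thesis by (simp add: mult.commute mult_right_mono)
  next
    case False
    then have Tp: "T powr p = r powr (- real N * p)" unfolding T_def by (simp add: powr_powr)
    have "(1 + r) powr E \<le> (2 * r) powr E" using False E0 by (intro powr_mono2) auto
    also have "\<dots> = 2 powr E * r powr E" by (simp add: powr_mult)
    finally have "r powr (- real N * p) * (1 + r) powr E \<le> r powr (- real N * p) * (2 powr E * r powr E)"
      by (rule mult_left_mono) simp
    also have "\<dots> = 2 powr E * (r powr (- real N * p) * r powr E)" by (simp add: mult_ac)
    also have "r powr (- real N * p) * r powr E = r powr (E - real N * p)"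
      by (simp add: powr_add[symmetric])
    also have "\<dots> \<le> r powr (- real n * p)"
      using False N unfolding E_def by (intro powr_mono) (auto simp: algebra_simps)
    finally show ?thesis unfolding Tp by simp
  qed
  have "dilate_majorant C n N r powr p = C powr p * T powr p"
    unfolding dilate_majorant_def T_def[symmetric] using assms(4) T0 by (simp add: powr_mult)
  then have "dilate_majorant C n N r powr p * (1 + r) powr (real n * (1 - p))
      = C powr p * (T powr p * (1 + r) powr E) * (1 + r) powr (- 2 * real n)"
    unfolding split by (simp add: mult_ac)
  also have "\<dots> \<le> C powr p * (2 powr E * r powr (- real n * p)) * (1 + r) powr (- 2 * real n)"
    by (intro mult_left_mono mult_right_mono main) auto
  finally show ?thesis unfolding E_def by (simp add: mult_ac)
qed

text \<open>Peetre's inequality moves the weight from \<open>x\<close> to the centre \<open>c\<close>; what remains factors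
  over the coordinates of \<open>x - c\<close>.\<close>
lemma dilate_majorant_weight_le_prod:
  fixes x c :: "'a::euclidean_space"
  assumes p: "0 < p" "p < 1" and N: "3 * real DIM('a) \<le> real N * p" and C: "0 \<le> C"
    and x: "\<forall>b\<in>Basis. (x - c) \<bullet> b \<noteq> 0"
  shows "dilate_majorant C DIM('a) N (norm (x - c)) powr p * ((1 + norm x) ^ DIM('a)) powr (p - 1)
    \<le> (1 + norm c) powr (- (real DIM('a) * (1 - p))) * (C powr p * 2 powr (real DIM('a) * (3 - p)))
       * (\<Prod>b\<in>Basis. coord_weight p (x \<bullet> b - c \<bullet> b))"
proof -
  define \<beta> where "\<beta> = real DIM('a) * (1 - p)"
  define y where "y = x - c"
  have \<beta>0: "0 \<le> \<beta>" unfolding \<beta>_def using p by simp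
  have nx: "0 < 1 + norm x" and nc: "0 < 1 + norm c" by (simp_all add: add_pos_nonneg)
  have "y \<noteq> 0" using x nonempty_Basis unfolding y_def by fastforce
  then have ny: "0 < norm y" by simp
  have "(1 + norm c) powr \<beta> \<le> ((1 + norm x) * (1 + norm y)) powr \<beta>"
    unfolding y_def using \<beta>0 one_plus_norm_diff_le[of c x] by (intro powr_mono2) auto
  then have "(1 + norm c) powr \<beta> \<le> (1 + norm x) powr \<beta> * (1 + norm y) powr \<beta>"
    using nx by (simp add: powr_mult add_pos_nonneg)
  then have "(1 + norm x) powr (- \<beta>) \<le> (1 + norm c) powr (- \<beta>) * (1 + norm y) powr \<beta>"
    using nx nc by (simp add: powr_minus field_simps)
  moreover have "((1 + norm x) ^ DIM('a)) powr (p - 1) = (1 + norm x) powr (- \<beta>)"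
    unfolding \<beta>_def using nx by (simp add: powr_realpow[symmetric] powr_powr algebra_simps)
  ultimately have weight: "((1 + norm x) ^ DIM('a)) powr (p - 1) \<le> (1 + norm c) powr (- \<beta>) * (1 + norm y) powr \<beta>"
    by simp
  have "dilate_majorant C DIM('a) N (norm y) powr p * ((1 + norm x) ^ DIM('a)) powr (p - 1)
      \<le> (1 + norm c) powr (- \<beta>) * (dilate_majorant C DIM('a) N (norm y) powr p * (1 + norm y) powr \<beta>)"
    using mult_left_mono[OF weight, of "dilate_majorant C DIM('a) N (norm y) powr p"] by (simp add: mult_ac)
  also have "\<dots> \<le> (1 + norm c) powr (- \<beta>) * (C powr p * 2 powr (real DIM('a) * (3 - p))
      * (norm y powr (- real DIM('a) * p) * (1 + norm y) powr (- 2 * real DIM('a))))"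
    unfolding \<beta>_def by (intro mult_left_mono dilate_majorant_powr_weight_le[OF p N C ny]) auto
  also have "\<dots> \<le> (1 + norm c) powr (- \<beta>) * (C powr p * 2 powr (real DIM('a) * (3 - p))
      * (\<Prod>b\<in>Basis. coord_weight p (y \<bullet> b)))"
    using x p unfolding y_def by (intro mult_left_mono prod_coord_weight_ge) auto
  finally show ?thesis unfolding y_def \<beta>_def by (simp add: inner_diff_left mult_ac)
qed

lemma nn_integral_dilate_majorant_weight_le:
  fixes c :: "'a::euclidean_space"
  assumes p: "0 < p" "p < 1" and N: "3 * real DIM('a) \<le> real N * p" and C: "0 \<le> C"
  shows "(\<integral>\<^sup>+ x. ennreal (dilate_majorant C DIM('a) N (norm (x - c)) powr p * ((1 + norm x) ^ DIM('a)) powr (p - 1)) \<partial>lborel)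
    \<le> ennreal ((1 + norm c) powr (- (real DIM('a) * (1 - p))) * (C powr p * 2 powr (real DIM('a) * (3 - p))))
       * (\<integral>\<^sup>+ u. ennreal (coord_weight p u) \<partial>lborel) ^ DIM('a)"
proof -
  define K where "K = (1 + norm c) powr (- (real DIM('a) * (1 - p))) * (C powr p * 2 powr (real DIM('a) * (3 - p)))"
  have "AE x in lborel. \<forall>b\<in>Basis. x \<bullet> b \<noteq> c \<bullet> b"
    using AE_lborel_inner_neq by (intro eventually_ball_finite) auto
  then have "AE x in lborel. ennreal (dilate_majorant C DIM('a) N (norm (x - c)) powr p * ((1 + norm x) ^ DIM('a)) powr (p - 1))
      \<le> ennreal K * (\<Prod>b\<in>Basis. ennreal (coord_weight p (x \<bullet> b - c \<bullet> b)))"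
  proof eventually_elim
    case (elim x)
    then show ?case
      using dilate_majorant_weight_le_prod[OF p N C, of x c] unfolding K_def
      by (simp add: inner_diff_left prod_ennreal coord_weight_nonneg ennreal_mult[symmetric] prod_nonneg ennreal_leI)
  qed
  then have "(\<integral>\<^sup>+ x. ennreal (dilate_majorant C DIM('a) N (norm (x - c)) powr p * ((1 + norm x) ^ DIM('a)) powr (p - 1)) \<partial>lborel)
     \<le> (\<integral>\<^sup>+ x. ennreal K * (\<Prod>b\<in>Basis. ennreal (coord_weight p (x \<bullet> b - c \<bullet> b))) \<partial>lborel)"
    by (rule nn_integral_mono_AE)
  also have "\<dots> = ennreal K * (\<integral>\<^sup>+ x. (\<Prod>b\<in>Basis. ennreal (coord_weight p (x \<bullet> b - c \<bullet> b))) \<partial>lborel)"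
    by (rule nn_integral_cmult) measurable
  also have "(\<integral>\<^sup>+ x. (\<Prod>b\<in>Basis. ennreal (coord_weight p (x \<bullet> b - c \<bullet> b))) \<partial>lborel)
     = (\<Prod>b\<in>(Basis::'a set). (\<integral>\<^sup>+ t. ennreal (coord_weight p (t - c \<bullet> b)) \<partial>lborel))"
    by (rule nn_integral_lborel_prod[where f = "\<lambda>b t. ennreal (coord_weight p (t - c \<bullet> b))"]) auto
  also have "\<dots> = (\<integral>\<^sup>+ u. ennreal (coord_weight p u) \<partial>lborel) ^ DIM('a)"
  proof -
    have "(\<integral>\<^sup>+ t. ennreal (coord_weight p (t - a)) \<partial>lborel) = (\<integral>\<^sup>+ u. ennreal (coord_weight p u) \<partial>lborel)" for a
      using nn_integral_real_affine[of "\<lambda>t. ennreal (coord_weight p (t - a))" 1 a] by simp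
    then show ?thesis by simp
  qed
  finally show ?thesis unfolding K_def .
qed

lemma one_plus_two_power_powr_le:
  assumes "0 \<le> \<beta>"
  shows "(1 + 2 ^ j :: real) powr (- \<beta>) \<le> (2 powr (- \<beta>)) ^ j"
proof -
  have "(1 + 2 ^ j :: real) powr (- \<beta>) \<le> (2 ^ j) powr (- \<beta>)"
    using assms by (intro powr_mono2') auto
  also have "\<dots> = (2 powr (- \<beta>)) ^ j"
    by (simp add: powr_realpow[symmetric] powr_powr powr_power mult_ac)
  finally show ?thesis .
qed

lemma suminf_nn_integral_dyadic_majorants_finite:
  assumes p: "0 < p" "p < 1" and N: "3 * real DIM('a) \<le> real N * p" and C: "0 \<le> C"
  shows "(\<Sum>j. \<integral>\<^sup>+ x. ennreal (dilate_majorant C DIM('a) N (norm (x - dyadic_point j)) powr p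
      * ((1 + norm (x :: 'a::euclidean_space)) ^ DIM('a)) powr (p - 1)) \<partial>lborel) < \<infinity>"
    (is "(\<Sum>j. ?I j) < \<infinity>")
proof -
  define F where "F = (\<integral>\<^sup>+ u. ennreal (coord_weight p u) \<partial>lborel) ^ DIM('a)"
  have "F < \<infinity>" unfolding F_def using nn_integral_coord_weight_finite[OF p] by (simp add: power_less_top_ennreal)
  define \<beta> where "\<beta> = real DIM('a) * (1 - p)"
  define q where "q = 2 powr (- \<beta>)"
  have "0 < \<beta>" unfolding \<beta>_def using p by simp
  then have "q < 2 powr 0" unfolding q_def by (intro powr_less_mono) auto
  then have q: "0 < q" "q < 1" unfolding q_def by auto
  define K where "K = C powr p * 2 powr (real DIM('a) * (3 - p))"
  have K0: "0 \<le> K" unfolding K_def by simp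
  have "?I j \<le> ennreal (q ^ j * K) * F" for j
  proof -
    have "?I j \<le> ennreal ((1 + norm (dyadic_point j :: 'a)) powr (- \<beta>) * K) * F"
      unfolding F_def K_def \<beta>_def by (rule nn_integral_dilate_majorant_weight_le[OF p N C])
    also have "\<dots> \<le> ennreal (q ^ j * K) * F"
      unfolding q_def using one_plus_two_power_powr_le[of \<beta> j] \<open>0 < \<beta>\<close> K0
      by (intro mult_right_mono ennreal_leI) (auto intro: mult_right_mono)
    finally show ?thesis .
  qed
  then have "(\<Sum>j. ?I j) \<le> (\<Sum>j. ennreal (q ^ j * K) * F)"
    by (intro suminf_le) auto
  also have "\<dots> = (\<Sum>j. ennreal (q ^ j * K)) * F" by simp
  also have "(\<Sum>j. ennreal (q ^ j * K)) = ennreal (\<Sum>j. q ^ j * K)"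
    using q K0 by (intro suminf_ennreal2 summable_mult2 summable_geometric) auto
  also have "ennreal (\<Sum>j. q ^ j * K) * F < \<infinity>"
    using \<open>F < \<infinity>\<close> by (simp add: ennreal_mult_less_top)
  finally show ?thesis .
qed

lemma dyadic_comb_in_h_phiP:
  fixes \<phi> :: "'a::euclidean_space \<Rightarrow> complex"
  assumes p: "0 < p" "p < 1" and "schwartz \<phi>"
  shows "dyadic_comb \<in> h_phiP p \<phi>"
proof -
  obtain M :: nat where "3 * real DIM('a) / p \<le> real M" using real_arch_simple by blast
  then have "3 * real DIM('a) \<le> real M * p" using p by (simp add: field_simps)
  then have N: "3 * real DIM('a) \<le> real (max M DIM('a)) * p" "DIM('a) \<le> max M DIM('a)"
    using p by (auto intro: order_trans mult_right_mono)
  obtain C where C: "\<And>z. (1 + norm z) ^ max M DIM('a) * norm (\<phi> z) \<le> C"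
    using schwartz_decay[OF assms(3)] by blast
  define b where "b j x = ennreal (dilate_majorant C DIM('a) (max M DIM('a)) (norm (x - dyadic_point j)) powr p
      * ((1 + norm x) ^ DIM('a)) powr (p - 1))" for j and x :: 'a
  obtain Q where Q: "(\<Sum>j. (\<integral>\<^sup>+ x. b j x \<partial>lborel)) = ennreal Q" "0 \<le> Q"
    using suminf_nn_integral_dyadic_majorants_finite[OF p N(1) decay_bound_nonneg[OF C]]
    unfolding b_def by (cases "\<Sum>j. (\<integral>\<^sup>+ x. b j x \<partial>lborel)") (auto simp: b_def)
  define l where "l = (Q + 1) powr (1 / p)"
  have l: "0 < l" "l powr (- p) = 1 / (Q + 1)"
    unfolding l_def using Q(2) p by (simp_all add: powr_powr powr_minus divide_inverse)
  have "AE x in lborel. x \<notin> range (dyadic_point :: nat \<Rightarrow> 'a)"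
    by (intro AE_not_in countable_imp_null_set_lborel) auto
  then have "AE x in lborel. ext_inf (phiP p x) (locmax dyadic_comb \<phi> x / ennreal l)
      \<le> ennreal (l powr (- p)) * (\<Sum>j. b j x)"
    by eventually_elim (unfold b_def, rule ext_inf_phiP_locmax_dyadic_comb_le[OF p N(2) C _ l(1)])
  then have "(\<integral>\<^sup>+ x. ext_inf (phiP p x) (locmax dyadic_comb \<phi> x / ennreal l) \<partial>lborel)
     \<le> (\<integral>\<^sup>+ x. ennreal (l powr (- p)) * (\<Sum>j. b j x) \<partial>lborel)"
    by (rule nn_integral_mono_AE)
  also have "\<dots> = ennreal (l powr (- p)) * (\<Sum>j. (\<integral>\<^sup>+ x. b j x \<partial>lborel))"
    unfolding b_def by (simp add: nn_integral_cmult nn_integral_suminf)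
  also have "\<dots> \<le> 1"
    unfolding Q(1) l(2) using Q(2) by (simp add: ennreal_mult[symmetric] ennreal_le_1)
  finally have "Lphi_norm p (locmax dyadic_comb \<phi>) < \<infinity>"
    unfolding Lphi_norm_less_top_iff using l(1) by blast
  then show ?thesis unfolding h_phiP_def using tempered_dyadic_comb by simp
qed

theorem theorem5p11:
  fixes p :: real and \<phi> :: "'a::euclidean_space \<Rightarrow> complex"
  assumes "0 < p" and "p < 1"
    and "schwartz \<phi>" and "integral UNIV \<phi> \<noteq> 0"
  shows "h_PhiP p \<phi> \<subset> h_phiP p \<phi>"
proof -
  have "\<phi> \<noteq> (\<lambda>_. 0)" using assms(4) by auto
  then show ?thesis
    using h_PhiP_subset_h_phiP[OF assms(1,2)] dyadic_comb_in_h_phiP[OF assms(1-3)]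
      dyadic_comb_notin_h_PhiP[of p \<phi>] assms(1,3) by auto
qed

end
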